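(* Let $Z\in\mathbb{R}^{p_1\times p_2}$ have independent entries $Z_{ij}\sim N(0,\sigma_j^2)$, where $\sigma_1,\dots,\sigma_{p_2}\ge 0$. Then there is a universal constant $c>0$ such that \[ \mathbb{E}\|ZZ^\top-\mathbb{E}ZZ^\top\|\ge c\left(\sqrt{p_1\sum_{j}\sigma_j^4}+p_1\max_j\sigma_j^2\right). \]
   Context: $\|\cdot\|$ is the spectral norm. *)

theory Defs
  imports "HOL-Probability.Probability"
begin

definition std_gaussian :: "real measure" where
  "std_gaussian = density lborel std_normal_density"

definition gauss_array_space :: "nat \<Rightarrow> nat \<Rightarrow> (nat \<times> nat \<Rightarrow> real) measure" where
  "gauss_array_space p1 p2 = PiM ({..<p1} \<times> {..<p2}) (\<lambda>_. std_gaussian)"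

definition spec_norm :: "nat \<Rightarrow> nat \<Rightarrow> (nat \<Rightarrow> nat \<Rightarrow> real) \<Rightarrow> real" where
  "spec_norm m n A =
     (SUP x \<in> {x :: nat \<Rightarrow> real. (\<Sum>j<n. (x j)\<^sup>2) \<le> 1}.
        sqrt (\<Sum>i<m. (\<Sum>j<n. A i j * x j)\<^sup>2))"

end

theory Submission
  imports Defs
begin

text \<open>
  Write W = Z Z^T - E[Z Z^T], so that W_ik = sum_j sigma_j^2 (g_ij g_kj - delta_ik) for a
  standard Gaussian array g. Each entry is a sum over j of independent centred terms whose
  fourth moment is at most 15 times their squared second moment; this comparison survives
  summation and gives E|W_ik| >= (sum_j sigma_j^4 / 15)^(1/2). Testing W against the first
  unit vector and the normalised signs of its first column gives
  ||W|| >= p1^(-1/2) sum_i |W_i1|, hence the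
  (p1 sum_j sigma_j^4)^(1/2) term. Testing W on both sides against the normalised signs of
  column j of g gives E||W|| >= (p1 - 1) sigma_j^2 (E|g|)^2 = (p1 - 1) sigma_j^2 2/pi, which
  together with max_j sigma_j^2 <= (sum_j sigma_j^4)^(1/2) controls the p1 max_j sigma_j^2 term.
\<close>

section \<open>Gaussian moments\<close>

lemma prob_space_std_gaussian: "prob_space std_gaussian"
  unfolding std_gaussian_def by (rule prob_space_normal_density) simp

interpretation std_gaussian: prob_space std_gaussian
  by (rule prob_space_std_gaussian)

lemma sets_std_gaussian [simp, measurable_cong]: "sets std_gaussian = sets borel"
  unfolding std_gaussian_def by simp

lemma integrable_std_gaussian_iff:
  assumes [measurable]: "f \<in> borel_measurable borel"
  shows "integrable std_gaussian f \<longleftrightarrow> integrable lborel (\<lambda>x. std_normal_density x * f x)"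
  unfolding std_gaussian_def by (subst integrable_density) auto

lemma integral_std_gaussian:
  assumes [measurable]: "f \<in> borel_measurable borel"
  shows "integral\<^sup>L std_gaussian f = integral\<^sup>L lborel (\<lambda>x. std_normal_density x * f x)"
  unfolding std_gaussian_def by (subst integral_density) auto

lemma integrable_std_gaussian_power [simp]: "integrable std_gaussian (\<lambda>x. x ^ k)"
  by (subst integrable_std_gaussian_iff) (auto intro: integrable_std_normal_moment)

lemma integrable_std_gaussian_chi_square_power: "integrable std_gaussian (\<lambda>x. (x\<^sup>2 - 1) ^ n)"
  unfolding diff_conv_add_uminus binomial_ring power_mult[symmetric]
  by (intro Bochner_Integration.integrable_sum integrable_mult_left integrable_mult_right
      integrable_std_gaussian_power)

lemma integrable_std_gaussian_abs: "integrable std_gaussian abs"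
  using integrable_std_normal_moment_abs[of 1] by (subst integrable_std_gaussian_iff) auto

lemma std_gaussian_moment_odd: "integral\<^sup>L std_gaussian (\<lambda>x. x ^ (2 * k + 1)) = 0"
  by (subst integral_std_gaussian, simp, rule integral_std_normal_moment_odd)

lemma std_gaussian_moment_even:
  "integral\<^sup>L std_gaussian (\<lambda>x. x ^ (2 * k)) = fact (2 * k) / (2 ^ k * fact k)"
  by (subst integral_std_gaussian) (auto simp: integral_std_normal_moment_even)

lemma std_gaussian_moments:
  "integral\<^sup>L std_gaussian (\<lambda>x. x) = 0"
  "integral\<^sup>L std_gaussian (\<lambda>x. x ^ 2) = 1" "integral\<^sup>L std_gaussian (\<lambda>x. x ^ 4) = 3"
  "integral\<^sup>L std_gaussian (\<lambda>x. x ^ 6) = 15" "integral\<^sup>L std_gaussian (\<lambda>x. x ^ 8) = 105"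
  using std_gaussian_moment_odd[of 0] std_gaussian_moment_even[of 1]
    std_gaussian_moment_even[of 2] std_gaussian_moment_even[of 3] std_gaussian_moment_even[of 4]
  by (simp_all add: fact_numeral)

lemma std_gaussian_abs_moment: "integral\<^sup>L std_gaussian abs = sqrt (2 / pi)"
  using integral_std_normal_moment_abs_odd[of 0] by (subst integral_std_gaussian) auto

lemma std_gaussian_chi_square_moments:
  "integral\<^sup>L std_gaussian (\<lambda>x. x\<^sup>2 - 1) = 0"
  "integral\<^sup>L std_gaussian (\<lambda>x. (x\<^sup>2 - 1) ^ 2) = 2"
  "integral\<^sup>L std_gaussian (\<lambda>x. (x\<^sup>2 - 1) ^ 4) = 60"
proof -
  have "(\<lambda>x::real. (x\<^sup>2 - 1) ^ 2) = (\<lambda>x. x ^ 4 - 2 * x ^ 2 + 1)"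
    "(\<lambda>x::real. (x\<^sup>2 - 1) ^ 4) = (\<lambda>x. x ^ 8 - 4 * x ^ 6 + 6 * x ^ 4 - 4 * x ^ 2 + 1)"
    by (auto simp: fun_eq_iff algebra_simps power_numeral_reduce)
  then show "integral\<^sup>L std_gaussian (\<lambda>x. x\<^sup>2 - 1) = 0"
    "integral\<^sup>L std_gaussian (\<lambda>x. (x\<^sup>2 - 1) ^ 2) = 2"
    "integral\<^sup>L std_gaussian (\<lambda>x. (x\<^sup>2 - 1) ^ 4) = 60"
    by (simp_all add: std_gaussian_moments std_gaussian.prob_space)
qed

text \<open>Unlike \<open>sgn\<close>, this sign is never 0, so \<open>sgn_nz x * sgn_nz x = 1\<close> holds everywhere
  and not only almost surely.\<close>

definition sgn_nz :: "real \<Rightarrow> real" where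
  "sgn_nz x = (if 0 \<le> x then 1 else -1)"

lemma sgn_nz_mult_self [simp]: "sgn_nz x * sgn_nz x = 1"
  by (simp add: sgn_nz_def)

lemma sgn_nz_mult_eq_abs: "sgn_nz x * x = \<bar>x\<bar>" "x * sgn_nz x = \<bar>x\<bar>"
  by (simp_all add: sgn_nz_def)

lemma borel_measurable_sgn_nz [measurable]: "sgn_nz \<in> borel_measurable borel"
  unfolding sgn_nz_def by measurable

lemma integrable_std_gaussian_sgn_nz: "integrable std_gaussian sgn_nz"
  by (rule Bochner_Integration.integrable_bound[OF std_gaussian.integrable_const[of "1::real"]])
    (simp_all add: sgn_nz_def)

section \<open>Products of independent Gaussian coordinates\<close>

lemma measurable_PiM_std_gaussian_coord:
  "c \<in> I \<Longrightarrow> (\<lambda>\<omega>. \<omega> c) \<in> borel_measurable (PiM I (\<lambda>_. std_gaussian))"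
  using measurable_component_singleton[of c I "\<lambda>_. std_gaussian"]
  by (simp add: measurable_cong_sets[OF refl sets_std_gaussian])

lemma PiM_std_gaussian_prod:
  fixes f :: "'i \<Rightarrow> real \<Rightarrow> real"
  assumes "finite I" "C \<subseteq> I" "\<And>c. c \<in> C \<Longrightarrow> integrable std_gaussian (f c)"
  shows "integrable (PiM I (\<lambda>_. std_gaussian)) (\<lambda>\<omega>. \<Prod>c\<in>C. f c (\<omega> c))"
    "integral\<^sup>L (PiM I (\<lambda>_. std_gaussian)) (\<lambda>\<omega>. \<Prod>c\<in>C. f c (\<omega> c))
       = (\<Prod>c\<in>C. integral\<^sup>L std_gaussian (f c))"
proof -
  interpret product_prob_space "\<lambda>_. std_gaussian" I by unfold_locales
  define f' where "f' c = (if c \<in> C then f c else (\<lambda>_. 1))" for c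
  have int: "integrable std_gaussian (f' c)" for c
    using assms by (auto simp: f'_def)
  have eq: "(\<Prod>c\<in>C. f c (\<omega> c)) = (\<Prod>c\<in>I. f' c (\<omega> c))" for \<omega>
    using assms(1,2) unfolding f'_def by (intro prod.mono_neutral_cong_left) auto
  have eq': "(\<Prod>c\<in>C. integral\<^sup>L std_gaussian (f c)) = (\<Prod>c\<in>I. integral\<^sup>L std_gaussian (f' c))"
    using assms(1,2) unfolding f'_def
    by (intro prod.mono_neutral_cong_left) (auto simp: std_gaussian.prob_space)
  show "integrable (PiM I (\<lambda>_. std_gaussian)) (\<lambda>\<omega>. \<Prod>c\<in>C. f c (\<omega> c))"
    unfolding eq by (rule product_integrable_prod[OF assms(1) int])
  show "integral\<^sup>L (PiM I (\<lambda>_. std_gaussian)) (\<lambda>\<omega>. \<Prod>c\<in>C. f c (\<omega> c))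
       = (\<Prod>c\<in>C. integral\<^sup>L std_gaussian (f c))"
    unfolding eq eq' by (rule product_integral_prod[OF assms(1) int])
qed

lemma PiM_std_gaussian_coord:
  fixes f :: "real \<Rightarrow> real"
  assumes "finite I" "a \<in> I" "integrable std_gaussian f"
  shows "integrable (PiM I (\<lambda>_. std_gaussian)) (\<lambda>\<omega>. f (\<omega> a))"
    "integral\<^sup>L (PiM I (\<lambda>_. std_gaussian)) (\<lambda>\<omega>. f (\<omega> a)) = integral\<^sup>L std_gaussian f"
  using PiM_std_gaussian_prod[OF assms(1), of "{a}" "\<lambda>_. f"] assms by auto

lemma PiM_std_gaussian_coord_pair:
  fixes f g :: "real \<Rightarrow> real"
  assumes "finite I" "a \<in> I" "b \<in> I" "a \<noteq> b"
    and "integrable std_gaussian f" "integrable std_gaussian g"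
  shows "integrable (PiM I (\<lambda>_. std_gaussian)) (\<lambda>\<omega>. f (\<omega> a) * g (\<omega> b))"
    "integral\<^sup>L (PiM I (\<lambda>_. std_gaussian)) (\<lambda>\<omega>. f (\<omega> a) * g (\<omega> b))
       = integral\<^sup>L std_gaussian f * integral\<^sup>L std_gaussian g"
  using PiM_std_gaussian_prod[OF assms(1), of "{a, b}" "\<lambda>c. if c = a then f else g"] assms
  by auto

lemma PiM_std_gaussian_coord_quad:
  fixes f g h k :: "real \<Rightarrow> real"
  assumes "finite I" "a \<in> I" "b \<in> I" "c \<in> I" "d \<in> I"
    and "distinct [a, b, c, d]"
    and "integrable std_gaussian f" "integrable std_gaussian g"
    and "integrable std_gaussian h" "integrable std_gaussian k"
  shows "integrable (PiM I (\<lambda>_. std_gaussian)) (\<lambda>\<omega>. f (\<omega> a) * g (\<omega> b) * h (\<omega> c) * k (\<omega> d))"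
    "integral\<^sup>L (PiM I (\<lambda>_. std_gaussian)) (\<lambda>\<omega>. f (\<omega> a) * g (\<omega> b) * h (\<omega> c) * k (\<omega> d))
       = integral\<^sup>L std_gaussian f * integral\<^sup>L std_gaussian g
         * integral\<^sup>L std_gaussian h * integral\<^sup>L std_gaussian k"
  using PiM_std_gaussian_prod[OF assms(1), of "{a, b, c, d}"
      "\<lambda>x. if x = a then f else if x = b then g else if x = c then h else k"] assms
  by (auto simp: mult.assoc)

lemma indep_vars_PiM_std_gaussian_coords:
  assumes "I \<noteq> {}"
  shows "prob_space.indep_vars (PiM I (\<lambda>_. std_gaussian)) (\<lambda>_. std_gaussian) (\<lambda>c \<omega>. \<omega> c) I"
proof -
  interpret P: prob_space "PiM I (\<lambda>_. std_gaussian)"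
    by (rule prob_space_PiM) (rule prob_space_std_gaussian)
  have "distr (PiM I (\<lambda>_. std_gaussian)) (PiM I (\<lambda>_. std_gaussian)) (\<lambda>x. \<lambda>i\<in>I. x i)
      = distr (PiM I (\<lambda>_. std_gaussian)) (PiM I (\<lambda>_. std_gaussian)) (\<lambda>x. x)"
    by (rule distr_cong) (auto simp: space_PiM)
  moreover have "(\<Pi>\<^sub>M i\<in>I. distr (PiM I (\<lambda>_. std_gaussian)) std_gaussian (\<lambda>\<omega>. \<omega> i))
      = PiM I (\<lambda>_. std_gaussian)"
    by (rule PiM_cong) (auto intro: distr_PiM_component prob_space_std_gaussian)
  ultimately show ?thesis
    by (subst P.indep_vars_iff_distr_eq_PiM'[OF assms measurable_component_singleton])
      (auto simp: distr_id)
qed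

section \<open>Moment comparison\<close>

lemma abs_ge_quartic:
  fixes x t :: real
  assumes "t > 0"
  shows "(3 * t\<^sup>2 * x\<^sup>2 - x ^ 4) / (2 * t ^ 3) \<le> \<bar>x\<bar>"
proof -
  define y where "y = \<bar>x\<bar>"
  have "x\<^sup>2 = y\<^sup>2" "x ^ 4 = y ^ 4"
    by (simp_all add: y_def power_even_abs_numeral)
  moreover have "2 * t ^ 3 * y - 3 * t\<^sup>2 * y\<^sup>2 + y ^ 4 = y * (y - t)\<^sup>2 * (y + 2 * t)"
    by (simp add: power2_eq_square power3_eq_cube power4_eq_xxxx algebra_simps)
  moreover have "y * (y - t)\<^sup>2 * (y + 2 * t) \<ge> 0"
    using assms by (simp add: y_def)
  ultimately show ?thesis
    using assms by (simp add: divide_le_eq y_def[symmetric] mult.commute)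
qed

context prob_space
begin

text \<open>Take expectations in \<open>abs_ge_quartic\<close> and choose \<open>t\<^sup>2 = K E[X\<^sup>2]\<close>.\<close>

lemma expectation_abs_ge_of_fourth_moment:
  fixes X :: "'a \<Rightarrow> real"
  assumes [measurable]: "X \<in> borel_measurable M"
    and int2: "integrable M (\<lambda>\<omega>. X \<omega> ^ 2)" and int4: "integrable M (\<lambda>\<omega>. X \<omega> ^ 4)"
    and fourth: "expectation (\<lambda>\<omega>. X \<omega> ^ 4) \<le> K * (expectation (\<lambda>\<omega>. X \<omega> ^ 2))\<^sup>2"
    and "K > 0"
  shows "sqrt (expectation (\<lambda>\<omega>. X \<omega> ^ 2)) / sqrt K \<le> expectation (\<lambda>\<omega>. \<bar>X \<omega>\<bar>)"
proof -
  define m where "m = expectation (\<lambda>\<omega>. X \<omega> ^ 2)"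
  have "m \<ge> 0"
    unfolding m_def by (simp add: integral_nonneg_AE)
  show ?thesis
    unfolding m_def[symmetric]
  proof (cases "m = 0")
    case True
    then show "sqrt m / sqrt K \<le> expectation (\<lambda>\<omega>. \<bar>X \<omega>\<bar>)"
      by (simp add: integral_nonneg_AE)
  next
    case False
    with \<open>m \<ge> 0\<close> have "m > 0" by simp
    define t where "t = sqrt (K * m)"
    have "t > 0" "t\<^sup>2 = K * m"
      using \<open>m > 0\<close> \<open>K > 0\<close> by (simp_all add: t_def)
    have "sqrt m / sqrt K = (3 * t\<^sup>2 * m - K * m\<^sup>2) / (2 * t ^ 3)"
    proof -
      have "(3 * t\<^sup>2 * m - K * m\<^sup>2) / (2 * t ^ 3) = m / t"
        using \<open>t > 0\<close> \<open>t\<^sup>2 = K * m\<close> \<open>m > 0\<close> \<open>K > 0\<close> by (simp add: field_simps power2_eq_square power3_eq_cube)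
      also have "\<dots> = sqrt m / sqrt K"
        using \<open>m > 0\<close> \<open>K > 0\<close> unfolding t_def real_sqrt_mult
        by (simp add: divide_divide_eq_left'[symmetric] real_div_sqrt)
      finally show ?thesis by simp
    qed
    also have "\<dots> \<le> (3 * t\<^sup>2 * m - expectation (\<lambda>\<omega>. X \<omega> ^ 4)) / (2 * t ^ 3)"
      using fourth \<open>t > 0\<close> unfolding m_def by (intro divide_right_mono) auto
    also have "\<dots> = expectation (\<lambda>\<omega>. (3 * t\<^sup>2 * X \<omega> ^ 2 - X \<omega> ^ 4) / (2 * t ^ 3))"
      using int2 int4 by (simp add: m_def)
    also have "\<dots> \<le> expectation (\<lambda>\<omega>. \<bar>X \<omega>\<bar>)"
      using int2 int4 square_integrable_imp_integrable[OF _ int2]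
      by (intro integral_mono abs_ge_quartic \<open>t > 0\<close>) auto
    finally show "sqrt m / sqrt K \<le> expectation (\<lambda>\<omega>. \<bar>X \<omega>\<bar>)" .
  qed
qed

lemma indep_var_power_mult:
  fixes X Y :: "'a \<Rightarrow> real"
  assumes ind: "indep_var borel X borel Y"
    and int: "integrable M (\<lambda>\<omega>. X \<omega> ^ p)" "integrable M (\<lambda>\<omega>. Y \<omega> ^ q)"
  shows "integrable M (\<lambda>\<omega>. X \<omega> ^ p * Y \<omega> ^ q)"
    "expectation (\<lambda>\<omega>. X \<omega> ^ p * Y \<omega> ^ q)
       = expectation (\<lambda>\<omega>. X \<omega> ^ p) * expectation (\<lambda>\<omega>. Y \<omega> ^ q)"
proof -
  have "indep_var borel ((\<lambda>x. x ^ p) \<circ> X) borel ((\<lambda>x. x ^ q) \<circ> Y)"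
    by (rule indep_var_compose[OF ind]) auto
  then have ind': "indep_var borel (\<lambda>\<omega>. X \<omega> ^ p) borel (\<lambda>\<omega>. Y \<omega> ^ q)"
    by (simp add: comp_def)
  show "integrable M (\<lambda>\<omega>. X \<omega> ^ p * Y \<omega> ^ q)"
    by (rule indep_var_integrable[OF ind' int])
  show "expectation (\<lambda>\<omega>. X \<omega> ^ p * Y \<omega> ^ q)
      = expectation (\<lambda>\<omega>. X \<omega> ^ p) * expectation (\<lambda>\<omega>. Y \<omega> ^ q)"
    by (rule indep_var_lebesgue_integral[OF ind' int])
qed

lemma indep_add_moments:
  fixes A B :: "'a \<Rightarrow> real"
  assumes indep: "indep_var borel A borel B"
    and int_A: "\<forall>k\<le>4. integrable M (\<lambda>\<omega>. A \<omega> ^ k)" and int_B: "\<And>k. integrable M (\<lambda>\<omega>. B \<omega> ^ k)"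
    and mean: "expectation A = 0" "expectation B = 0"
  shows "\<forall>k\<le>4. integrable M (\<lambda>\<omega>. (A \<omega> + B \<omega>) ^ k)"
    "expectation (\<lambda>\<omega>. A \<omega> + B \<omega>) = 0"
    "expectation (\<lambda>\<omega>. (A \<omega> + B \<omega>) ^ 2)
       = expectation (\<lambda>\<omega>. A \<omega> ^ 2) + expectation (\<lambda>\<omega>. B \<omega> ^ 2)"
    "expectation (\<lambda>\<omega>. (A \<omega> + B \<omega>) ^ 4) = expectation (\<lambda>\<omega>. A \<omega> ^ 4)
       + 6 * expectation (\<lambda>\<omega>. A \<omega> ^ 2) * expectation (\<lambda>\<omega>. B \<omega> ^ 2) + expectation (\<lambda>\<omega>. B \<omega> ^ 4)"
proof -
  note indep_mult = indep_var_power_mult[OF indep _ int_B]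
  have prod: "integrable M (\<lambda>\<omega>. A \<omega> ^ p * B \<omega> ^ q)"
    "expectation (\<lambda>\<omega>. A \<omega> ^ p * B \<omega> ^ q) = expectation (\<lambda>\<omega>. A \<omega> ^ p) * expectation (\<lambda>\<omega>. B \<omega> ^ q)"
    if "p \<le> 4" for p q
    using indep_mult int_A that by auto
  show int_sum: "\<forall>k\<le>4. integrable M (\<lambda>\<omega>. (A \<omega> + B \<omega>) ^ k)"
    unfolding binomial_ring
    by (intro allI impI Bochner_Integration.integrable_sum integrable_mult_right)
      (auto simp: mult.assoc intro!: prod)
  have E_binom: "expectation (\<lambda>\<omega>. (A \<omega> + B \<omega>) ^ k) = (\<Sum>i\<le>k. of_nat (k choose i) *
      (expectation (\<lambda>\<omega>. A \<omega> ^ i) * expectation (\<lambda>\<omega>. B \<omega> ^ (k - i))))"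
    if "k \<le> 4" for k
    unfolding binomial_ring using that
    by (subst Bochner_Integration.integral_sum)
      (auto simp: mult.assoc prod intro!: integrable_mult_right prod sum.cong)
  show "expectation (\<lambda>\<omega>. A \<omega> + B \<omega>) = 0"
    using E_binom[of 1] mean by simp
  show "expectation (\<lambda>\<omega>. (A \<omega> + B \<omega>) ^ 2)
      = expectation (\<lambda>\<omega>. A \<omega> ^ 2) + expectation (\<lambda>\<omega>. B \<omega> ^ 2)"
    using E_binom[of 2] mean by (simp add: atMost_Suc numeral_2_eq_2 prob_space)
  show "expectation (\<lambda>\<omega>. (A \<omega> + B \<omega>) ^ 4) = expectation (\<lambda>\<omega>. A \<omega> ^ 4)
      + 6 * expectation (\<lambda>\<omega>. A \<omega> ^ 2) * expectation (\<lambda>\<omega>. B \<omega> ^ 2) + expectation (\<lambda>\<omega>. B \<omega> ^ 4)"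
    using E_binom[of 4] mean by (simp add: atMost_Suc numeral_eq_Suc prob_space)
qed

text \<open>The constant \<open>K \<ge> 3\<close> survives summation because the cross term of the fourth moment
  of \<open>A + B\<close> is \<open>6 E[A\<^sup>2] E[B\<^sup>2] \<le> 2K E[A\<^sup>2] E[B\<^sup>2]\<close>.\<close>

lemma sum_indep_moments:
  fixes Y :: "'j \<Rightarrow> 'a \<Rightarrow> real"
  assumes "finite J"
    and indep: "\<And>j J'. j \<in> J \<Longrightarrow> J' \<subseteq> J \<Longrightarrow> j \<notin> J' \<Longrightarrow>
      indep_var borel (\<lambda>\<omega>. \<Sum>l\<in>J'. Y l \<omega>) borel (Y j)"
    and int: "\<And>j k. j \<in> J \<Longrightarrow> integrable M (\<lambda>\<omega>. Y j \<omega> ^ k)"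
    and mean: "\<And>j. j \<in> J \<Longrightarrow> expectation (Y j) = 0"
    and fourth: "\<And>j. j \<in> J \<Longrightarrow>
      expectation (\<lambda>\<omega>. Y j \<omega> ^ 4) \<le> K * (expectation (\<lambda>\<omega>. Y j \<omega> ^ 2))\<^sup>2"
    and "3 \<le> K"
  shows "(\<forall>k\<le>4. integrable M (\<lambda>\<omega>. (\<Sum>j\<in>J. Y j \<omega>) ^ k)) \<and>
    expectation (\<lambda>\<omega>. \<Sum>j\<in>J. Y j \<omega>) = 0 \<and>
    expectation (\<lambda>\<omega>. (\<Sum>j\<in>J. Y j \<omega>) ^ 2) = (\<Sum>j\<in>J. expectation (\<lambda>\<omega>. Y j \<omega> ^ 2)) \<and>
    expectation (\<lambda>\<omega>. (\<Sum>j\<in>J. Y j \<omega>) ^ 4) \<le> K * (\<Sum>j\<in>J. expectation (\<lambda>\<omega>. Y j \<omega> ^ 2))\<^sup>2"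
  using \<open>finite J\<close> subset_refl[of J]
proof (induction J rule: finite_subset_induct')
  case empty
  then show ?case by simp
next
  case (insert a F)
  define A where "A = (\<lambda>\<omega>. \<Sum>j\<in>F. Y j \<omega>)"
  define s where "s = (\<Sum>j\<in>F. expectation (\<lambda>\<omega>. Y j \<omega> ^ 2))"
  define v where "v = expectation (\<lambda>\<omega>. Y a \<omega> ^ 2)"
  have IH: "\<forall>k\<le>4. integrable M (\<lambda>\<omega>. A \<omega> ^ k)" "expectation A = 0"
    "expectation (\<lambda>\<omega>. A \<omega> ^ 2) = s" "expectation (\<lambda>\<omega>. A \<omega> ^ 4) \<le> K * s\<^sup>2"
    using insert.IH by (simp_all add: A_def s_def)
  have "indep_var borel A borel (Y a)"
    unfolding A_def using insert by (intro indep) auto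
  note step = indep_add_moments[OF this IH(1) int IH(2) mean, OF insert(2) insert(2)]
  have "s \<ge> 0" "v \<ge> 0"
    unfolding s_def v_def by (auto intro!: sum_nonneg integral_nonneg_AE)
  then have "6 * s * v \<le> 2 * K * s * v"
    using \<open>3 \<le> K\<close> by (simp add: mult_right_mono)
  then have "expectation (\<lambda>\<omega>. (A \<omega> + Y a \<omega>) ^ 4) \<le> K * (s + v)\<^sup>2"
    using step(4) IH(3,4) fourth[OF insert(2)] by (simp add: v_def power2_eq_square algebra_simps)
  moreover have "(\<Sum>j\<in>insert a F. Y j \<omega>) = A \<omega> + Y a \<omega>" for \<omega>
    using insert by (simp add: A_def add.commute)
  moreover have "(\<Sum>j\<in>insert a F. expectation (\<lambda>\<omega>. Y j \<omega> ^ 2)) = s + v"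
    using insert by (simp add: s_def v_def)
  ultimately show ?case
    using step(1-3) IH(3) by (simp add: v_def)
qed

end

section \<open>The spectral norm\<close>

definition mat_vec :: "nat \<Rightarrow> (nat \<Rightarrow> nat \<Rightarrow> real) \<Rightarrow> (nat \<Rightarrow> real) \<Rightarrow> nat \<Rightarrow> real" where
  "mat_vec n A x i = (\<Sum>j<n. A i j * x j)"

definition frobenius_norm :: "nat \<Rightarrow> nat \<Rightarrow> (nat \<Rightarrow> nat \<Rightarrow> real) \<Rightarrow> real" where
  "frobenius_norm m n A = L2_set (\<lambda>i. L2_set (A i) {..<n}) {..<m}"

lemma frobenius_norm_nonneg: "frobenius_norm m n A \<ge> 0"
  by (simp add: frobenius_norm_def)

lemma frobenius_norm_le_sum_abs: "frobenius_norm m n A \<le> (\<Sum>i<m. \<Sum>j<n. \<bar>A i j\<bar>)"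
proof -
  have "frobenius_norm m n A \<le> (\<Sum>i<m. L2_set (A i) {..<n})"
    unfolding frobenius_norm_def by (rule L2_set_le_sum) simp
  also have "\<dots> \<le> (\<Sum>i<m. \<Sum>j<n. \<bar>A i j\<bar>)"
    by (intro sum_mono L2_set_le_sum_abs)
  finally show ?thesis .
qed

lemma L2_set_mat_vec_le: "L2_set (mat_vec n A x) {..<m} \<le> frobenius_norm m n A * L2_set x {..<n}"
proof -
  have "\<bar>mat_vec n A x i\<bar> \<le> L2_set (A i) {..<n} * L2_set x {..<n}" for i
  proof -
    have "\<bar>mat_vec n A x i\<bar> \<le> (\<Sum>j<n. \<bar>A i j\<bar> * \<bar>x j\<bar>)"
      unfolding mat_vec_def by (rule order_trans[OF sum_abs]) (simp add: abs_mult)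
    also have "\<dots> \<le> L2_set (A i) {..<n} * L2_set x {..<n}"
      by (rule L2_set_mult_ineq)
    finally show ?thesis .
  qed
  then have "L2_set (\<lambda>i. \<bar>mat_vec n A x i\<bar>) {..<m}
      \<le> L2_set (\<lambda>i. L2_set (A i) {..<n} * L2_set x {..<n}) {..<m}"
    by (intro L2_set_mono) auto
  then show ?thesis
    unfolding frobenius_norm_def L2_set_left_distrib[OF L2_set_nonneg, symmetric]
    by (simp add: L2_set_def)
qed

lemma spec_norm_eq_SUP_L2_set:
  "spec_norm m n A = (SUP x \<in> {x. L2_set x {..<n} \<le> 1}. L2_set (mat_vec n A x) {..<m})"
  unfolding spec_norm_def L2_set_def mat_vec_def by simp

lemma bdd_above_L2_set_mat_vec:
  "bdd_above ((\<lambda>x. L2_set (mat_vec n A x) {..<m}) ` {x. L2_set x {..<n} \<le> 1})"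
proof (rule bdd_aboveI2)
  fix x assume "x \<in> {x. L2_set x {..<n} \<le> 1}"
  then have "frobenius_norm m n A * L2_set x {..<n} \<le> frobenius_norm m n A"
    using frobenius_norm_nonneg by (simp add: mult_left_le)
  then show "L2_set (mat_vec n A x) {..<m} \<le> frobenius_norm m n A"
    using L2_set_mat_vec_le order_trans by blast
qed

lemma L2_set_mat_vec_le_spec_norm:
  "L2_set x {..<n} \<le> 1 \<Longrightarrow> L2_set (mat_vec n A x) {..<m} \<le> spec_norm m n A"
  unfolding spec_norm_eq_SUP_L2_set by (rule cSUP_upper[OF _ bdd_above_L2_set_mat_vec]) simp

lemma spec_norm_nonneg: "spec_norm m n A \<ge> 0"
  using L2_set_mat_vec_le_spec_norm[of "\<lambda>_. 0" n A m] by (simp add: L2_set_def mat_vec_def)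

lemma spec_norm_le_frobenius_norm: "spec_norm m n A \<le> frobenius_norm m n A"
  unfolding spec_norm_eq_SUP_L2_set
proof (rule cSUP_least)
  show "{x. L2_set x {..<n} \<le> 1} \<noteq> {}"
    by (auto intro!: exI[of _ "\<lambda>_. 0"] simp: L2_set_def)
  fix x assume "x \<in> {x. L2_set x {..<n} \<le> 1}"
  then have "frobenius_norm m n A * L2_set x {..<n} \<le> frobenius_norm m n A"
    using frobenius_norm_nonneg by (simp add: mult_left_le)
  then show "L2_set (mat_vec n A x) {..<m} \<le> frobenius_norm m n A"
    using L2_set_mat_vec_le order_trans by blast
qed

lemma spec_norm_cong:
  assumes "\<And>i j. i < m \<Longrightarrow> j < n \<Longrightarrow> A i j = B i j"
  shows "spec_norm m n A = spec_norm m n B"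
  unfolding spec_norm_def using assms by (intro SUP_cong refl arg_cong[where f=sqrt] sum.cong) auto

lemma bilinear_le_spec_norm:
  assumes "L2_set u {..<m} \<le> 1" "L2_set v {..<n} \<le> 1"
  shows "(\<Sum>i<m. u i * (\<Sum>j<n. A i j * v j)) \<le> spec_norm m n A"
proof -
  have "(\<Sum>i<m. u i * (\<Sum>j<n. A i j * v j)) \<le> (\<Sum>i<m. \<bar>u i\<bar> * \<bar>mat_vec n A v i\<bar>)"
    unfolding mat_vec_def by (rule sum_mono) (metis abs_ge_self abs_mult)
  also have "\<dots> \<le> L2_set u {..<m} * L2_set (mat_vec n A v) {..<m}"
    by (rule L2_set_mult_ineq)
  also have "\<dots> \<le> L2_set (mat_vec n A v) {..<m}"
    using assms(1) by (simp add: mult_left_le_one_le)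
  also have "\<dots> \<le> spec_norm m n A"
    using L2_set_mat_vec_le_spec_norm[OF assms(2)] .
  finally show ?thesis .
qed

definition rational_ball :: "nat \<Rightarrow> (nat \<Rightarrow> real) set" where
  "rational_ball n = {x \<in> PiE {..<n} (\<lambda>_. \<rat>). L2_set x {..<n} \<le> 1}"

lemma countable_rational_ball: "countable (rational_ball n)"
proof -
  have "countable (PiE {..<n} (\<lambda>_. \<rat>::real set))"
    by (rule countable_PiE) (auto simp: countable_rat)
  then show ?thesis
    unfolding rational_ball_def by (rule countable_subset[rotated]) auto
qed

lemma rational_vector_approx:
  fixes x :: "nat \<Rightarrow> real"
  assumes "\<theta> > 0"
  shows "\<exists>y\<in>PiE {..<n} (\<lambda>_. \<rat>). L2_set (\<lambda>j. y j - x j) {..<n} \<le> \<theta>"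
proof -
  define \<eta> where "\<eta> = \<theta> / (sqrt n + 1)"
  have "\<eta> > 0"
    using assms by (simp add: \<eta>_def add_nonneg_pos)
  have "\<exists>r\<in>\<rat>. \<bar>r - x j\<bar> < \<eta>" for j
    using Rats_dense_in_real[of "x j - \<eta>" "x j + \<eta>"] \<open>\<eta> > 0\<close> by (force simp: abs_less_iff)
  then obtain r where r: "\<And>j. r j \<in> \<rat>" "\<And>j. \<bar>r j - x j\<bar> < \<eta>"
    by metis
  have "L2_set (\<lambda>j. restrict r {..<n} j - x j) {..<n} = L2_set (\<lambda>j. \<bar>r j - x j\<bar>) {..<n}"
    by (simp add: L2_set_def)
  also have "\<dots> \<le> L2_set (\<lambda>_. \<eta>) {..<n}"
    using r(2) by (intro L2_set_mono) (auto simp: less_imp_le)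
  also have "\<dots> = \<theta> * (sqrt n / (sqrt n + 1))"
    using \<open>\<eta> > 0\<close> assms by (simp add: L2_set_constant \<eta>_def)
  also have "\<dots> \<le> \<theta>"
    using assms by (intro mult_left_le) (auto simp: divide_le_eq_1 add_nonneg_pos)
  finally show ?thesis
    using r(1) by (intro bexI[of _ "restrict r {..<n}"]) auto
qed

text \<open>Shrink \<open>x\<close> by the factor \<open>1 - \<theta>\<close> to make room inside the ball for the rounding error.\<close>

lemma rational_ball_approx:
  assumes x: "L2_set x {..<n} \<le> 1" and "e > 0"
  shows "\<exists>y\<in>rational_ball n. L2_set (\<lambda>j. x j - y j) {..<n} \<le> e"
proof -
  define \<theta> where "\<theta> = min 1 (e / 2)"
  have "\<theta> > 0" "\<theta> \<le> 1" "2 * \<theta> \<le> e"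
    using \<open>e > 0\<close> by (auto simp: \<theta>_def)
  define c where "c = 1 - \<theta>"
  obtain y where y: "y \<in> PiE {..<n} (\<lambda>_. \<rat>)" and dist_cx: "L2_set (\<lambda>j. y j - c * x j) {..<n} \<le> \<theta>"
    using rational_vector_approx[OF \<open>\<theta> > 0\<close>, of n "\<lambda>j. c * x j"] by blast
  have norm_cx: "L2_set (\<lambda>j. c * x j) {..<n} = c * L2_set x {..<n}"
    using \<open>\<theta> \<le> 1\<close> by (simp add: L2_set_right_distrib c_def)
  have "L2_set y {..<n} \<le> L2_set (\<lambda>j. c * x j) {..<n} + L2_set (\<lambda>j. y j - c * x j) {..<n}"
    using L2_set_triangle_ineq[of "\<lambda>j. c * x j" "\<lambda>j. y j - c * x j"] by simp
  also have "\<dots> \<le> 1"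
  proof -
    have "c * L2_set x {..<n} \<le> c"
      using x \<open>\<theta> \<le> 1\<close> by (simp add: c_def mult_left_le)
    then show ?thesis
      using dist_cx norm_cx c_def by linarith
  qed
  finally have "y \<in> rational_ball n"
    using y by (simp add: rational_ball_def)
  moreover have "L2_set (\<lambda>j. x j - y j) {..<n} \<le> e"
  proof -
    have "L2_set (\<lambda>j. x j - y j) {..<n}
        \<le> L2_set (\<lambda>j. (1 - c) * x j) {..<n} + L2_set (\<lambda>j. c * x j - y j) {..<n}"
      using L2_set_triangle_ineq[of "\<lambda>j. (1 - c) * x j" "\<lambda>j. c * x j - y j"]
      by (simp add: algebra_simps)
    also have "L2_set (\<lambda>j. c * x j - y j) {..<n} = L2_set (\<lambda>j. y j - c * x j) {..<n}"
      unfolding L2_set_def by (simp add: power2_commute)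
    also have "L2_set (\<lambda>j. (1 - c) * x j) {..<n} = \<theta> * L2_set x {..<n}"
      using \<open>\<theta> > 0\<close> by (simp add: L2_set_right_distrib c_def)
    finally show ?thesis
      using dist_cx x \<open>\<theta> > 0\<close> \<open>2 * \<theta> \<le> e\<close> by (smt (verit) mult_left_le)
  qed
  ultimately show ?thesis by blast
qed

lemma spec_norm_eq_SUP_rational_ball:
  "spec_norm m n A = (SUP y \<in> rational_ball n. L2_set (mat_vec n A y) {..<m})"
proof -
  have bdd: "bdd_above ((\<lambda>y. L2_set (mat_vec n A y) {..<m}) ` rational_ball n)"
    by (rule bdd_above_mono[OF bdd_above_L2_set_mat_vec]) (auto simp: rational_ball_def)
  have "restrict (\<lambda>_. 0) {..<n} \<in> rational_ball n"
    by (auto simp: rational_ball_def L2_set_def)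
  then have "rational_ball n \<noteq> {}"
    by blast
  have "L2_set (mat_vec n A x) {..<m} \<le> (SUP y \<in> rational_ball n. L2_set (mat_vec n A y) {..<m})"
    if x: "L2_set x {..<n} \<le> 1" for x
  proof (rule field_le_epsilon)
    fix e :: real assume "e > 0"
    define F where "F = frobenius_norm m n A"
    have "F \<ge> 0"
      by (simp add: F_def frobenius_norm_nonneg)
    obtain y where y: "y \<in> rational_ball n" "L2_set (\<lambda>j. x j - y j) {..<n} \<le> e / (F + 1)"
      using rational_ball_approx[OF x, of "e / (F + 1)"] \<open>e > 0\<close> \<open>F \<ge> 0\<close> by auto
    have "mat_vec n A x = (\<lambda>i. mat_vec n A y i + mat_vec n A (\<lambda>j. x j - y j) i)"
      by (simp add: fun_eq_iff mat_vec_def algebra_simps sum_subtractf)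
    then have "L2_set (mat_vec n A x) {..<m}
        \<le> L2_set (mat_vec n A y) {..<m} + L2_set (mat_vec n A (\<lambda>j. x j - y j)) {..<m}"
      by (simp only: L2_set_triangle_ineq)
    also have "L2_set (mat_vec n A (\<lambda>j. x j - y j)) {..<m} \<le> F * (e / (F + 1))"
      using L2_set_mat_vec_le[of n A "\<lambda>j. x j - y j" m] y(2) \<open>F \<ge> 0\<close>
      unfolding F_def[symmetric] by (meson mult_left_mono order_trans)
    also have "F * (e / (F + 1)) \<le> e"
      using \<open>F \<ge> 0\<close> \<open>e > 0\<close> by (simp add: field_simps)
    also have "L2_set (mat_vec n A y) {..<m} \<le> (SUP y \<in> rational_ball n. L2_set (mat_vec n A y) {..<m})"
      by (rule cSUP_upper[OF y(1) bdd])
    finally show "L2_set (mat_vec n A x) {..<m}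
        \<le> (SUP y \<in> rational_ball n. L2_set (mat_vec n A y) {..<m}) + e"
      by simp
  qed
  then show ?thesis
    unfolding spec_norm_eq_SUP_L2_set
    using \<open>rational_ball n \<noteq> {}\<close> bdd
    by (intro antisym cSUP_least cSUP_mono bdd_above_L2_set_mat_vec)
      (auto simp: rational_ball_def)
qed

lemma borel_measurable_spec_norm:
  assumes "\<And>i j. i < m \<Longrightarrow> j < n \<Longrightarrow> (\<lambda>\<omega>. A \<omega> i j) \<in> borel_measurable M"
  shows "(\<lambda>\<omega>. spec_norm m n (A \<omega>)) \<in> borel_measurable M"
proof -
  have "(\<lambda>\<omega>. L2_set (mat_vec n (A \<omega>) y) {..<m}) \<in> borel_measurable M" for y
    unfolding L2_set_def mat_vec_def using assms
    by (intro measurable_compose[OF _ borel_measurable_sqrt] borel_measurable_sum borel_measurable_power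
        borel_measurable_times borel_measurable_const) auto
  then show ?thesis
    unfolding spec_norm_eq_SUP_rational_ball
    by (rule borel_measurable_cSUP[OF countable_rational_ball])
      (rule bdd_above_mono[OF bdd_above_L2_set_mat_vec], auto simp: rational_ball_def)
qed

text \<open>Test against the normalised sign vector of column \<open>j\<close> and the unit vector \<open>e\<^sub>j\<close>.\<close>

lemma column_abs_sum_le_spec_norm:
  assumes "j < n"
  shows "(\<Sum>i<m. \<bar>A i j\<bar>) \<le> sqrt m * spec_norm m n A"
proof (cases "m = 0")
  case True
  then show ?thesis by simp
next
  case False
  define u where "u i = sgn_nz (A i j) / sqrt m" for i
  define v where "v k = (if k = j then 1 else 0 :: real)" for k
  have "(u i)\<^sup>2 = 1 / m" for i
    by (simp add: u_def power_divide power2_eq_square)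
  then have "L2_set u {..<m} \<le> 1"
    using False by (simp add: L2_set_def)
  moreover have "L2_set v {..<n} \<le> 1"
    using assms by (simp add: L2_set_def v_def if_distrib[of "\<lambda>x. x\<^sup>2"] cong: if_cong)
  ultimately have "(\<Sum>i<m. u i * (\<Sum>k<n. A i k * v k)) \<le> spec_norm m n A"
    by (rule bilinear_le_spec_norm)
  moreover have "(\<Sum>i<m. u i * (\<Sum>k<n. A i k * v k)) = (\<Sum>i<m. \<bar>A i j\<bar>) / sqrt m"
    using assms
    by (simp add: v_def u_def sum_divide_distrib if_distrib[of "\<lambda>x. _ * x"] sgn_nz_mult_eq_abs
        mult.commute cong: if_cong)
  ultimately show ?thesis
    using False by (simp add: divide_le_eq mult.commute)
qed

lemma quadratic_form_le_spec_norm: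
  assumes "\<And>i. i < m \<Longrightarrow> \<bar>s i\<bar> \<le> 1"
  shows "(\<Sum>i<m. \<Sum>k<m. s i * A i k * s k) \<le> real m * spec_norm m m A"
proof (cases "m = 0")
  case True
  then show ?thesis by simp
next
  case False
  define u where "u i = s i / sqrt m" for i
  have "(\<Sum>i<m. (u i)\<^sup>2) \<le> (\<Sum>i<m. 1 / m)"
    using assms by (intro sum_mono) (simp add: u_def power_divide abs_square_le_1 divide_right_mono)
  then have "L2_set u {..<m} \<le> 1"
    using False by (simp add: L2_set_def)
  then have "(\<Sum>i<m. u i * (\<Sum>k<m. A i k * u k)) \<le> spec_norm m m A"
    by (intro bilinear_le_spec_norm)
  moreover have "(\<Sum>i<m. u i * (\<Sum>k<m. A i k * u k)) = (\<Sum>i<m. \<Sum>k<m. s i * A i k * s k) / m"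
    using False by (simp add: u_def sum_distrib_left sum_divide_distrib mult_ac)
  ultimately show ?thesis
    using False by (simp add: divide_le_eq mult.commute)
qed

section \<open>The centred Gram matrix of a Gaussian array\<close>

interpretation gauss_array: prob_space "gauss_array_space p1 p2" for p1 p2
  unfolding gauss_array_space_def by (rule prob_space_PiM) (rule prob_space_std_gaussian)

lemma borel_measurable_PiM_std_gaussian_pair:
  assumes "(\<lambda>z. \<Phi> (fst z) (snd z)) \<in> borel_measurable (borel \<Otimes>\<^sub>M borel)" "a \<in> I" "b \<in> I"
  shows "(\<lambda>\<omega>. \<Phi> (\<omega> a) (\<omega> b)) \<in> borel_measurable (PiM I (\<lambda>_. std_gaussian))"
proof -
  have "(\<lambda>\<omega>. (\<omega> a, \<omega> b)) \<in> measurable (PiM I (\<lambda>_. std_gaussian)) (borel \<Otimes>\<^sub>M borel)"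
    by (intro measurable_Pair measurable_PiM_std_gaussian_coord assms)
  from measurable_compose[OF this assms(1)] show ?thesis by simp
qed

text \<open>The two sums depend on the disjoint blocks of entries \<open>{i1, i2} \<times> J\<close> and \<open>{i1, i2} \<times> {j}\<close>.\<close>

lemma indep_var_gauss_array_column_sums:
  fixes \<Phi> :: "nat \<Rightarrow> real \<Rightarrow> real \<Rightarrow> real"
  assumes "i1 < p1" "i2 < p1" "J \<subseteq> {..<p2}" "j < p2" "j \<notin> J"
    and \<Phi>: "\<And>l. (\<lambda>z. \<Phi> l (fst z) (snd z)) \<in> borel_measurable (borel \<Otimes>\<^sub>M borel)"
  shows "prob_space.indep_var (gauss_array_space p1 p2)
    borel (\<lambda>\<omega>. \<Sum>l\<in>J. \<Phi> l (\<omega> (i1, l)) (\<omega> (i2, l))) borel (\<lambda>\<omega>. \<Phi> j (\<omega> (i1, j)) (\<omega> (i2, j)))"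
proof -
  define I where "I = {..<p1} \<times> {..<p2}"
  define A where "A = {i1, i2} \<times> J"
  define B where "B = {i1, i2} \<times> {j}"
  have "I \<noteq> {}"
    using assms by (auto simp: I_def)
  have "A \<inter> B = {}" "A \<subseteq> I" "B \<subseteq> I"
    using assms by (auto simp: A_def B_def I_def)
  with indep_vars_PiM_std_gaussian_coords[OF \<open>I \<noteq> {}\<close>]
  have "prob_space.indep_var (PiM I (\<lambda>_. std_gaussian))
      (PiM A (\<lambda>_. std_gaussian)) (\<lambda>\<omega>. restrict \<omega> A) (PiM B (\<lambda>_. std_gaussian)) (\<lambda>\<omega>. restrict \<omega> B)"
    using gauss_array.indep_var_restrict[of p1 p2] by (simp add: gauss_array_space_def I_def)
  moreover have "(\<lambda>\<eta>. \<Sum>l\<in>J. \<Phi> l (\<eta> (i1, l)) (\<eta> (i2, l))) \<in> borel_measurable (PiM A (\<lambda>_. std_gaussian))"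
    by (intro borel_measurable_sum borel_measurable_PiM_std_gaussian_pair[OF \<Phi>]) (auto simp: A_def)
  moreover have "(\<lambda>\<eta>. \<Phi> j (\<eta> (i1, j)) (\<eta> (i2, j))) \<in> borel_measurable (PiM B (\<lambda>_. std_gaussian))"
    by (intro borel_measurable_PiM_std_gaussian_pair[OF \<Phi>]) (auto simp: B_def)
  ultimately have "prob_space.indep_var (gauss_array_space p1 p2)
      borel ((\<lambda>\<eta>. \<Sum>l\<in>J. \<Phi> l (\<eta> (i1, l)) (\<eta> (i2, l))) \<circ> (\<lambda>\<omega>. restrict \<omega> A))
      borel ((\<lambda>\<eta>. \<Phi> j (\<eta> (i1, j)) (\<eta> (i2, j))) \<circ> (\<lambda>\<omega>. restrict \<omega> B))"
    unfolding gauss_array_space_def I_def by (rule gauss_array.indep_var_compose[unfolded gauss_array_space_def])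
  moreover have "(\<lambda>\<eta>. \<Sum>l\<in>J. \<Phi> l (\<eta> (i1, l)) (\<eta> (i2, l))) \<circ> (\<lambda>\<omega>. restrict \<omega> A)
      = (\<lambda>\<omega>. \<Sum>l\<in>J. \<Phi> l (\<omega> (i1, l)) (\<omega> (i2, l)))"
    by (auto simp: A_def intro!: sum.cong)
  moreover have "(\<lambda>\<eta>. \<Phi> j (\<eta> (i1, j)) (\<eta> (i2, j))) \<circ> (\<lambda>\<omega>. restrict \<omega> B)
      = (\<lambda>\<omega>. \<Phi> j (\<omega> (i1, j)) (\<omega> (i2, j)))"
    by (auto simp: B_def)
  ultimately show ?thesis by simp
qed

text \<open>The entries of \<open>Z Z\<^sup>T - E[Z Z\<^sup>T]\<close>, with \<open>Z i j = \<sigma> j * \<omega> (i, j)\<close>.\<close>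

definition centred_gram :: "nat \<Rightarrow> (nat \<Rightarrow> real) \<Rightarrow> (nat \<times> nat \<Rightarrow> real) \<Rightarrow> nat \<Rightarrow> nat \<Rightarrow> real" where
  "centred_gram p2 \<sigma> \<omega> i k = (\<Sum>j<p2. (\<sigma> j)\<^sup>2 * (\<omega> (i, j) * \<omega> (k, j) - (if i = k then 1 else 0)))"

lemma gauss_array_centred_product_power:
  assumes "i < p1" "k < p1" "j < p2"
  shows "integrable (gauss_array_space p1 p2) (\<lambda>\<omega>. (\<omega> (i, j) * \<omega> (k, j) - (if i = k then 1 else 0)) ^ n)"
    "integral\<^sup>L (gauss_array_space p1 p2) (\<lambda>\<omega>. (\<omega> (i, j) * \<omega> (k, j) - (if i = k then 1 else 0)) ^ n)
       = (if i = k then integral\<^sup>L std_gaussian (\<lambda>x. (x\<^sup>2 - 1) ^ n)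
          else (integral\<^sup>L std_gaussian (\<lambda>x. x ^ n))\<^sup>2)"
proof -
  have fin: "finite ({..<p1} \<times> {..<p2})" by simp
  note diag = PiM_std_gaussian_coord[OF fin _ integrable_std_gaussian_chi_square_power, of "(i, j)" n]
  note off = PiM_std_gaussian_coord_pair[OF fin _ _ _ integrable_std_gaussian_power
      integrable_std_gaussian_power, of "(i, j)" "(k, j)" n n]
  show "integrable (gauss_array_space p1 p2) (\<lambda>\<omega>. (\<omega> (i, j) * \<omega> (k, j) - (if i = k then 1 else 0)) ^ n)"
    "integral\<^sup>L (gauss_array_space p1 p2) (\<lambda>\<omega>. (\<omega> (i, j) * \<omega> (k, j) - (if i = k then 1 else 0)) ^ n)
       = (if i = k then integral\<^sup>L std_gaussian (\<lambda>x. (x\<^sup>2 - 1) ^ n)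
          else (integral\<^sup>L std_gaussian (\<lambda>x. x ^ n))\<^sup>2)"
    using assms diag off
    by (auto simp: gauss_array_space_def power2_eq_square power_mult_distrib)
qed

lemma gauss_array_centred_product:
  assumes "i < p1" "k < p1" "j < p2"
  shows "integrable (gauss_array_space p1 p2) (\<lambda>\<omega>. \<omega> (i, j) * \<omega> (k, j) - (if i = k then 1 else 0))"
    "integral\<^sup>L (gauss_array_space p1 p2) (\<lambda>\<omega>. \<omega> (i, j) * \<omega> (k, j) - (if i = k then 1 else 0)) = 0"
  using gauss_array_centred_product_power[OF assms, of 1]
  by (simp_all add: std_gaussian_moments std_gaussian_chi_square_moments)

lemma integrable_centred_gram:
  assumes "i < p1" "k < p1"
  shows "integrable (gauss_array_space p1 p2) (\<lambda>\<omega>. centred_gram p2 \<sigma> \<omega> i k)"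
  unfolding centred_gram_def
  using gauss_array_centred_product(1)[OF assms] by auto

lemma integral_centred_gram:
  assumes "i < p1" "k < p1"
  shows "integral\<^sup>L (gauss_array_space p1 p2) (\<lambda>\<omega>. centred_gram p2 \<sigma> \<omega> i k) = 0"
  unfolding centred_gram_def
  using gauss_array_centred_product[OF assms] by (subst Bochner_Integration.integral_sum) auto

lemma gram_eq_centred_gram:
  "(\<Sum>j<p2. \<sigma> j * \<omega> (i, j) * (\<sigma> j * \<omega> (k, j)))
    = centred_gram p2 \<sigma> \<omega> i k + (if i = k then \<Sum>j<p2. (\<sigma> j)\<^sup>2 else 0)"
  by (simp add: centred_gram_def right_diff_distrib sum_subtractf power2_eq_square mult_ac)

lemma gauss_array_gram:
  assumes "i < p1" "k < p1"
  shows "integral\<^sup>L (gauss_array_space p1 p2) (\<lambda>\<omega>. \<Sum>j<p2. \<sigma> j * \<omega> (i, j) * (\<sigma> j * \<omega> (k, j)))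
    = (if i = k then \<Sum>j<p2. (\<sigma> j)\<^sup>2 else 0)"
  unfolding gram_eq_centred_gram
  using integrable_centred_gram[OF assms] integral_centred_gram[OF assms]
  by (simp add: gauss_array.prob_space)

lemma borel_measurable_centred_gram:
  assumes "i < p1" "k < p1"
  shows "(\<lambda>\<omega>. centred_gram p2 \<sigma> \<omega> i k) \<in> borel_measurable (gauss_array_space p1 p2)"
  using integrable_centred_gram[OF assms] by blast

lemma integrable_spec_norm_centred_gram:
  "integrable (gauss_array_space p1 p2) (\<lambda>\<omega>. spec_norm p1 p1 (centred_gram p2 \<sigma> \<omega>))"
proof (rule Bochner_Integration.integrable_bound)
  show "integrable (gauss_array_space p1 p2) (\<lambda>\<omega>. \<Sum>i<p1. \<Sum>k<p1. \<bar>centred_gram p2 \<sigma> \<omega> i k\<bar>)"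
    by (intro Bochner_Integration.integrable_sum integrable_abs integrable_centred_gram) auto
  show "(\<lambda>\<omega>. spec_norm p1 p1 (centred_gram p2 \<sigma> \<omega>)) \<in> borel_measurable (gauss_array_space p1 p2)"
    by (intro borel_measurable_spec_norm borel_measurable_centred_gram)
  show "AE \<omega> in gauss_array_space p1 p2. norm (spec_norm p1 p1 (centred_gram p2 \<sigma> \<omega>))
      \<le> norm (\<Sum>i<p1. \<Sum>k<p1. \<bar>centred_gram p2 \<sigma> \<omega> i k\<bar>)"
  proof (rule AE_I2)
    fix \<omega>
    have "spec_norm p1 p1 (centred_gram p2 \<sigma> \<omega>) \<le> (\<Sum>i<p1. \<Sum>k<p1. \<bar>centred_gram p2 \<sigma> \<omega> i k\<bar>)"
      using spec_norm_le_frobenius_norm frobenius_norm_le_sum_abs by (rule order_trans)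
    then show "norm (spec_norm p1 p1 (centred_gram p2 \<sigma> \<omega>))
        \<le> norm (\<Sum>i<p1. \<Sum>k<p1. \<bar>centred_gram p2 \<sigma> \<omega> i k\<bar>)"
      by (simp add: spec_norm_nonneg)
  qed
qed

text \<open>The ratio of fourth moment to squared second moment of a term is \<open>3 \<cdot> 3 = 9\<close> off the
  diagonal and \<open>60 / 2\<^sup>2 = 15\<close> on it.\<close>

lemma centred_gram_term_moments:
  fixes \<sigma> :: "nat \<Rightarrow> real"
  assumes "i < p1" "k < p1" "j < p2"
  defines "Y \<equiv> \<lambda>\<omega>. (\<sigma> j)\<^sup>2 * (\<omega> (i, j) * \<omega> (k, j) - (if i = k then 1 else 0))"
    and "v \<equiv> (if i = k then 2 else 1) * (\<sigma> j) ^ 4"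
  shows "integrable (gauss_array_space p1 p2) (\<lambda>\<omega>. Y \<omega> ^ n)"
    "integral\<^sup>L (gauss_array_space p1 p2) Y = 0"
    "integral\<^sup>L (gauss_array_space p1 p2) (\<lambda>\<omega>. Y \<omega> ^ 2) = v"
    "integral\<^sup>L (gauss_array_space p1 p2) (\<lambda>\<omega>. Y \<omega> ^ 4) \<le> 15 * v\<^sup>2"
proof -
  have Y_power: "integrable (gauss_array_space p1 p2) (\<lambda>\<omega>. Y \<omega> ^ n)"
    "integral\<^sup>L (gauss_array_space p1 p2) (\<lambda>\<omega>. Y \<omega> ^ n) = ((\<sigma> j)\<^sup>2) ^ n *
      (if i = k then integral\<^sup>L std_gaussian (\<lambda>x. (x\<^sup>2 - 1) ^ n)
       else (integral\<^sup>L std_gaussian (\<lambda>x. x ^ n))\<^sup>2)" for n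
    using gauss_array_centred_product_power[OF assms(1-3), of n]
    by (simp_all add: Y_def power_mult_distrib)
  then show "integrable (gauss_array_space p1 p2) (\<lambda>\<omega>. Y \<omega> ^ n)"
    "integral\<^sup>L (gauss_array_space p1 p2) Y = 0"
    "integral\<^sup>L (gauss_array_space p1 p2) (\<lambda>\<omega>. Y \<omega> ^ 2) = v"
    "integral\<^sup>L (gauss_array_space p1 p2) (\<lambda>\<omega>. Y \<omega> ^ 4) \<le> 15 * v\<^sup>2"
    using Y_power(2)[of 1] Y_power(2)[of 2] Y_power(2)[of 4]
    by (auto simp: v_def std_gaussian_moments std_gaussian_chi_square_moments power_mult[symmetric]
        power_mult_distrib)
qed

lemma expectation_abs_centred_gram_ge:
  assumes "i < p1" "k < p1"
  shows "sqrt ((\<Sum>j<p2. (\<sigma> j) ^ 4) / 15)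
    \<le> integral\<^sup>L (gauss_array_space p1 p2) (\<lambda>\<omega>. \<bar>centred_gram p2 \<sigma> \<omega> i k\<bar>)"
proof -
  define \<Phi> where "\<Phi> j a b = (\<sigma> j)\<^sup>2 * (a * b - (if i = k then 1 else 0))" for j a b
  define Y where "Y j \<omega> = \<Phi> j (\<omega> (i, j)) (\<omega> (k, j))" for j \<omega>
  define v where "v j = (if i = k then 2 else 1) * (\<sigma> j) ^ 4" for j
  have moments: "integrable (gauss_array_space p1 p2) (\<lambda>\<omega>. Y j \<omega> ^ n)"
    "integral\<^sup>L (gauss_array_space p1 p2) (Y j) = 0"
    "integral\<^sup>L (gauss_array_space p1 p2) (\<lambda>\<omega>. Y j \<omega> ^ 2) = v j"
    "integral\<^sup>L (gauss_array_space p1 p2) (\<lambda>\<omega>. Y j \<omega> ^ 4) \<le> 15 * (v j)\<^sup>2"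
    if "j < p2" for j n
    using centred_gram_term_moments[OF assms that, where \<sigma>=\<sigma>]
    by (simp_all add: Y_def[abs_def] \<Phi>_def v_def)
  have \<Phi>_measurable: "(\<lambda>z. \<Phi> l (fst z) (snd z)) \<in> borel_measurable (borel \<Otimes>\<^sub>M borel)" for l
    unfolding \<Phi>_def by measurable
  have "(\<forall>n\<le>4. integrable (gauss_array_space p1 p2) (\<lambda>\<omega>. (\<Sum>j\<in>{..<p2}. Y j \<omega>) ^ n)) \<and>
    integral\<^sup>L (gauss_array_space p1 p2) (\<lambda>\<omega>. \<Sum>j\<in>{..<p2}. Y j \<omega>) = 0 \<and>
    integral\<^sup>L (gauss_array_space p1 p2) (\<lambda>\<omega>. (\<Sum>j\<in>{..<p2}. Y j \<omega>) ^ 2)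
      = (\<Sum>j\<in>{..<p2}. integral\<^sup>L (gauss_array_space p1 p2) (\<lambda>\<omega>. Y j \<omega> ^ 2)) \<and>
    integral\<^sup>L (gauss_array_space p1 p2) (\<lambda>\<omega>. (\<Sum>j\<in>{..<p2}. Y j \<omega>) ^ 4)
      \<le> 15 * (\<Sum>j\<in>{..<p2}. integral\<^sup>L (gauss_array_space p1 p2) (\<lambda>\<omega>. Y j \<omega> ^ 2))\<^sup>2"
  proof (rule gauss_array.sum_indep_moments)
    fix j J' assume "j \<in> {..<p2}" "J' \<subseteq> {..<p2}" "j \<notin> J'"
    then show "prob_space.indep_var (gauss_array_space p1 p2) borel (\<lambda>\<omega>. \<Sum>l\<in>J'. Y l \<omega>) borel (Y j)"
      unfolding Y_def using indep_var_gauss_array_column_sums[OF assms _ _ _ \<Phi>_measurable] by auto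
  qed (use moments in auto)
  then have sum_moments: "integrable (gauss_array_space p1 p2) (\<lambda>\<omega>. (\<Sum>j<p2. Y j \<omega>) ^ 2)"
    "integrable (gauss_array_space p1 p2) (\<lambda>\<omega>. (\<Sum>j<p2. Y j \<omega>) ^ 4)"
    "integral\<^sup>L (gauss_array_space p1 p2) (\<lambda>\<omega>. (\<Sum>j<p2. Y j \<omega>) ^ 2) = (\<Sum>j<p2. v j)"
    "integral\<^sup>L (gauss_array_space p1 p2) (\<lambda>\<omega>. (\<Sum>j<p2. Y j \<omega>) ^ 4) \<le> 15 * (\<Sum>j<p2. v j)\<^sup>2"
    using moments(3) by auto
  have W_eq: "centred_gram p2 \<sigma> \<omega> i k = (\<Sum>j<p2. Y j \<omega>)" for \<omega>
    by (simp add: centred_gram_def Y_def \<Phi>_def)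
  have "(\<lambda>\<omega>. \<Sum>j<p2. Y j \<omega>) \<in> borel_measurable (gauss_array_space p1 p2)"
    using borel_measurable_centred_gram[OF assms, of p2 \<sigma>] by (simp only: W_eq)
  from gauss_array.expectation_abs_ge_of_fourth_moment[OF this sum_moments(1,2)]
  have "sqrt (\<Sum>j<p2. v j) / sqrt 15
      \<le> integral\<^sup>L (gauss_array_space p1 p2) (\<lambda>\<omega>. \<bar>centred_gram p2 \<sigma> \<omega> i k\<bar>)"
    using sum_moments(3,4) by (simp add: W_eq)
  moreover have "sqrt (\<Sum>j<p2. (\<sigma> j) ^ 4) / sqrt 15 \<le> sqrt (\<Sum>j<p2. v j) / sqrt 15"
    by (intro divide_right_mono real_sqrt_le_mono sum_mono) (auto simp: v_def)
  ultimately show ?thesis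
    by (simp add: real_sqrt_divide)
qed

section \<open>Lower bounds for the expected spectral norm\<close>

lemma sqrt_sum_sigma4_le_expectation_spec_norm:
  "sqrt (real p1 * (\<Sum>j<p2. (\<sigma> j) ^ 4))
    \<le> sqrt 15 * integral\<^sup>L (gauss_array_space p1 p2) (\<lambda>\<omega>. spec_norm p1 p1 (centred_gram p2 \<sigma> \<omega>))"
proof (cases "p1 = 0")
  case True
  then show ?thesis
    by (simp add: integral_nonneg_AE spec_norm_nonneg)
next
  case False
  define X where "X = (\<Sum>j<p2. (\<sigma> j) ^ 4)"
  define E where "E = integral\<^sup>L (gauss_array_space p1 p2) (\<lambda>\<omega>. spec_norm p1 p1 (centred_gram p2 \<sigma> \<omega>))"
  have "real p1 * sqrt (X / 15)
      \<le> (\<Sum>i<p1. integral\<^sup>L (gauss_array_space p1 p2) (\<lambda>\<omega>. \<bar>centred_gram p2 \<sigma> \<omega> i 0\<bar>))"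
    using sum_mono[of "{..<p1}" "\<lambda>_. sqrt (X / 15)"] expectation_abs_centred_gram_ge False
    by (simp add: X_def)
  also have "\<dots> = integral\<^sup>L (gauss_array_space p1 p2) (\<lambda>\<omega>. \<Sum>i<p1. \<bar>centred_gram p2 \<sigma> \<omega> i 0\<bar>)"
    using False by (intro Bochner_Integration.integral_sum[symmetric] integrable_abs integrable_centred_gram) auto
  also have "\<dots> \<le> integral\<^sup>L (gauss_array_space p1 p2) (\<lambda>\<omega>. sqrt p1 * spec_norm p1 p1 (centred_gram p2 \<sigma> \<omega>))"
    using False
    by (intro integral_mono column_abs_sum_le_spec_norm integrable_spec_norm_centred_gram integrable_mult_right
        Bochner_Integration.integrable_sum integrable_abs integrable_centred_gram) auto
  also have "\<dots> = sqrt p1 * E"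
    by (simp add: E_def)
  finally have "sqrt p1 * (sqrt p1 * sqrt (X / 15)) \<le> sqrt p1 * E"
    by (simp add: mult.assoc[symmetric])
  then have "sqrt p1 * sqrt (X / 15) \<le> E"
    using False by (simp add: mult_le_cancel_left_pos)
  then show ?thesis
    by (simp add: X_def E_def real_sqrt_mult real_sqrt_divide field_simps)
qed

lemma gauss_array_sign_weighted_product:
  assumes "i < p1" "k < p1" "i \<noteq> k" "j < p2" "j0 < p2"
  defines "T \<equiv> \<lambda>\<omega>. sgn_nz (\<omega> (i, j0)) * sgn_nz (\<omega> (k, j0)) * \<omega> (i, j) * \<omega> (k, j)"
  shows "integrable (gauss_array_space p1 p2) T"
    "integral\<^sup>L (gauss_array_space p1 p2) T = (if j = j0 then 2 / pi else 0)"
proof -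
  have "integrable (gauss_array_space p1 p2) T \<and>
    integral\<^sup>L (gauss_array_space p1 p2) T = (if j = j0 then 2 / pi else 0)"
  proof (cases "j = j0")
    case True
    then have "T = (\<lambda>\<omega>. \<bar>\<omega> (i, j0)\<bar> * \<bar>\<omega> (k, j0)\<bar>)"
      by (auto simp: T_def fun_eq_iff sgn_nz_def)
    with True show ?thesis
      using PiM_std_gaussian_coord_pair[of "{..<p1} \<times> {..<p2}" "(i, j0)" "(k, j0)" abs abs] assms
      by (simp add: gauss_array_space_def integrable_std_gaussian_abs std_gaussian_abs_moment)
  next
    case False
    then show ?thesis
      using PiM_std_gaussian_coord_quad[of "{..<p1} \<times> {..<p2}" "(i, j0)" "(k, j0)" "(i, j)" "(k, j)"
          sgn_nz sgn_nz "\<lambda>x. x" "\<lambda>x. x"] assms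
      by (simp add: gauss_array_space_def integrable_std_gaussian_sgn_nz std_gaussian_moments
          integrable_std_gaussian_power[of 1, simplified])
  qed
  then show "integrable (gauss_array_space p1 p2) T"
    "integral\<^sup>L (gauss_array_space p1 p2) T = (if j = j0 then 2 / pi else 0)"
    by simp_all
qed

lemma integral_sign_weighted_centred_gram:
  assumes "i < p1" "k < p1" "j0 < p2"
  shows "integrable (gauss_array_space p1 p2)
      (\<lambda>\<omega>. sgn_nz (\<omega> (i, j0)) * centred_gram p2 \<sigma> \<omega> i k * sgn_nz (\<omega> (k, j0)))"
    "integral\<^sup>L (gauss_array_space p1 p2)
      (\<lambda>\<omega>. sgn_nz (\<omega> (i, j0)) * centred_gram p2 \<sigma> \<omega> i k * sgn_nz (\<omega> (k, j0)))
     = (if i = k then 0 else (\<sigma> j0)\<^sup>2 * (2 / pi))"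
proof -
  define F where "F \<omega> = sgn_nz (\<omega> (i, j0)) * centred_gram p2 \<sigma> \<omega> i k * sgn_nz (\<omega> (k, j0))" for \<omega>
  define T where "T j = (\<lambda>\<omega>. sgn_nz (\<omega> (i, j0)) * sgn_nz (\<omega> (k, j0)) * \<omega> (i, j) * \<omega> (k, j))" for j
  have "integrable (gauss_array_space p1 p2) F \<and>
    integral\<^sup>L (gauss_array_space p1 p2) F = (if i = k then 0 else (\<sigma> j0)\<^sup>2 * (2 / pi))"
  proof (cases "i = k")
    case True
    then have "F = (\<lambda>\<omega>. centred_gram p2 \<sigma> \<omega> i k)"
      by (simp add: F_def fun_eq_iff mult.commute)
    with True show ?thesis
      using integrable_centred_gram[OF assms(1,2)] integral_centred_gram[OF assms(1,2)] by simp
  next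
    case False
    note T = gauss_array_sign_weighted_product[OF assms(1,2) False _ assms(3), folded T_def]
    have "F = (\<lambda>\<omega>. \<Sum>j<p2. (\<sigma> j)\<^sup>2 * T j \<omega>)"
      using False by (simp add: F_def T_def fun_eq_iff centred_gram_def sum_distrib_left mult_ac)
    moreover have "integrable (gauss_array_space p1 p2) (\<lambda>\<omega>. \<Sum>j<p2. (\<sigma> j)\<^sup>2 * T j \<omega>)"
      using T(1) by (intro Bochner_Integration.integrable_sum integrable_mult_right) auto
    moreover have "integral\<^sup>L (gauss_array_space p1 p2) (\<lambda>\<omega>. \<Sum>j<p2. (\<sigma> j)\<^sup>2 * T j \<omega>)
        = (\<sigma> j0)\<^sup>2 * (2 / pi)"
      using T assms
      by (subst Bochner_Integration.integral_sum) (auto simp: if_distrib[of "\<lambda>x. _ * x"] cong: if_cong)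
    ultimately show ?thesis
      using False by simp
  qed
  then show "integrable (gauss_array_space p1 p2) (\<lambda>\<omega>. sgn_nz (\<omega> (i, j0)) * centred_gram p2 \<sigma> \<omega> i k * sgn_nz (\<omega> (k, j0)))"
    "integral\<^sup>L (gauss_array_space p1 p2)
      (\<lambda>\<omega>. sgn_nz (\<omega> (i, j0)) * centred_gram p2 \<sigma> \<omega> i k * sgn_nz (\<omega> (k, j0)))
     = (if i = k then 0 else (\<sigma> j0)\<^sup>2 * (2 / pi))"
    by (simp_all add: F_def[abs_def])
qed

text \<open>The quadratic form of the signs of column \<open>j0\<close>, normalised by \<open>\<surd>p1\<close>, picks up
  \<open>\<sigma>\<^sub>j\<^sub>0\<^sup>2 E|g| E|g|\<close> from each of the \<open>p1 (p1 - 1)\<close> off-diagonal entries.\<close>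

lemma column_variance_le_expectation_spec_norm:
  assumes "j0 < p2"
  shows "(real p1 - 1) * (\<sigma> j0)\<^sup>2 * (2 / pi)
    \<le> integral\<^sup>L (gauss_array_space p1 p2) (\<lambda>\<omega>. spec_norm p1 p1 (centred_gram p2 \<sigma> \<omega>))"
proof (cases "p1 = 0")
  case True
  then show ?thesis
    by (auto intro!: order_trans[OF _ integral_nonneg_AE] simp: spec_norm_nonneg)
next
  case False
  define h where "h i k \<omega> = sgn_nz (\<omega> (i, j0)) * centred_gram p2 \<sigma> \<omega> i k * sgn_nz (\<omega> (k, j0))"
    for i k \<omega>
  have int_h: "integrable (gauss_array_space p1 p2) (h i k)"
    and E_h: "integral\<^sup>L (gauss_array_space p1 p2) (h i k) = (if i = k then 0 else (\<sigma> j0)\<^sup>2 * (2 / pi))"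
    if "i < p1" "k < p1" for i k
    using integral_sign_weighted_centred_gram[OF that assms] by (simp_all add: h_def[abs_def])
  have "(\<Sum>k<p1. if i = k then 0 else c) = (real p1 - 1) * c" if "i < p1" for i and c :: real
    using that by (simp add: sum.If_cases Diff_eq[symmetric] card_Diff_singleton algebra_simps of_nat_diff)
  then have "real p1 * ((real p1 - 1) * (\<sigma> j0)\<^sup>2 * (2 / pi))
      = (\<Sum>i<p1. \<Sum>k<p1. integral\<^sup>L (gauss_array_space p1 p2) (h i k))"
    by (simp add: E_h)
  also have "\<dots> = integral\<^sup>L (gauss_array_space p1 p2) (\<lambda>\<omega>. \<Sum>i<p1. \<Sum>k<p1. h i k \<omega>)"
    using int_h by (subst Bochner_Integration.integral_sum) (auto intro!: sum.cong Bochner_Integration.integral_sum[symmetric])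
  also have "\<dots> \<le> integral\<^sup>L (gauss_array_space p1 p2)
      (\<lambda>\<omega>. real p1 * spec_norm p1 p1 (centred_gram p2 \<sigma> \<omega>))"
    unfolding h_def
    by (intro integral_mono quadratic_form_le_spec_norm integrable_mult_right integrable_spec_norm_centred_gram
        Bochner_Integration.integrable_sum int_h[unfolded h_def]) (auto simp: sgn_nz_def)
  finally have "real p1 * ((real p1 - 1) * (\<sigma> j0)\<^sup>2 * (2 / pi))
      \<le> real p1 * integral\<^sup>L (gauss_array_space p1 p2) (\<lambda>\<omega>. spec_norm p1 p1 (centred_gram p2 \<sigma> \<omega>))"
    by simp
  then show ?thesis
    using False by (metis mult_le_cancel_left_pos of_nat_0_less_iff neq0_conv)
qed

lemma expectation_spec_norm_centred_gram_ge:
  assumes "0 < p2"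
  shows "sqrt (real p1 * (\<Sum>j<p2. (\<sigma> j) ^ 4)) + real p1 * (MAX j\<in>{..<p2}. (\<sigma> j)\<^sup>2)
    \<le> 10 * integral\<^sup>L (gauss_array_space p1 p2) (\<lambda>\<omega>. spec_norm p1 p1 (centred_gram p2 \<sigma> \<omega>))"
proof -
  define E where "E = integral\<^sup>L (gauss_array_space p1 p2) (\<lambda>\<omega>. spec_norm p1 p1 (centred_gram p2 \<sigma> \<omega>))"
  define X where "X = (\<Sum>j<p2. (\<sigma> j) ^ 4)"
  have "(MAX j\<in>{..<p2}. (\<sigma> j)\<^sup>2) \<in> (\<lambda>j. (\<sigma> j)\<^sup>2) ` {..<p2}"
    using assms by (intro Max_in) auto
  then obtain j0 where "j0 < p2" and max_eq: "(MAX j\<in>{..<p2}. (\<sigma> j)\<^sup>2) = (\<sigma> j0)\<^sup>2"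
    by auto
  have "E \<ge> 0"
    unfolding E_def by (simp add: integral_nonneg_AE spec_norm_nonneg)
  have "sqrt 15 \<le> (4 :: real)"
    by (rule real_le_lsqrt) auto
  then have sqrt_bound: "sqrt (real p1 * X) \<le> 4 * E"
    using sqrt_sum_sigma4_le_expectation_spec_norm[of p1 \<sigma> p2] \<open>E \<ge> 0\<close>
    unfolding E_def[symmetric] X_def[symmetric] by (meson mult_right_mono order_trans)
  have "(real p1 - 1) * (\<sigma> j0)\<^sup>2 * (1 / 2) \<le> (real p1 - 1) * (\<sigma> j0)\<^sup>2 * (2 / pi)" if "p1 \<ge> 1"
    using that pi_less_4 by (intro mult_left_mono mult_nonneg_nonneg) (auto simp: field_simps)
  then have col_bound: "(real p1 - 1) * (\<sigma> j0)\<^sup>2 \<le> 2 * E" if "p1 \<ge> 1"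
    using column_variance_le_expectation_spec_norm[OF \<open>j0 < p2\<close>, of p1 \<sigma>] that
    unfolding E_def[symmetric] by linarith
  have "(\<sigma> j0)\<^sup>2 \<le> sqrt (real p1 * X)" if "p1 \<ge> 1"
  proof -
    have "((\<sigma> j0)\<^sup>2)\<^sup>2 = (\<sigma> j0) ^ 4"
      by (simp flip: power_mult)
    also have "\<dots> \<le> X"
      unfolding X_def using \<open>j0 < p2\<close> by (intro member_le_sum) auto
    also have "X \<le> real p1 * X"
      using that mult_right_mono[of 1 "real p1" X] by (simp add: X_def sum_nonneg)
    finally show ?thesis
      by (simp add: real_le_rsqrt)
  qed
  then have "real p1 * (\<sigma> j0)\<^sup>2 \<le> 6 * E"
    using col_bound sqrt_bound \<open>E \<ge> 0\<close> by (cases "p1 = 0") (auto simp: algebra_simps)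
  with sqrt_bound show ?thesis
    by (simp add: E_def X_def max_eq)
qed

theorem theorem3p7:
  shows "\<exists>c>0. \<forall>(p1::nat) (p2::nat) (\<sigma>::nat \<Rightarrow> real).
     0 < p2 \<longrightarrow> (\<forall>j<p2. 0 \<le> \<sigma> j) \<longrightarrow>
     (let M = gauss_array_space p1 p2;
          Z = (\<lambda>\<omega> i j. \<sigma> j * \<omega> (i, j));
          ZZt = (\<lambda>\<omega> i k. \<Sum>j<p2. Z \<omega> i j * Z \<omega> k j);
          EZZt = (\<lambda>i k. integral\<^sup>L M (\<lambda>\<omega>. ZZt \<omega> i k))
      in integral\<^sup>L M (\<lambda>\<omega>. spec_norm p1 p1 (\<lambda>i k. ZZt \<omega> i k - EZZt i k))
         \<ge> c * (sqrt (real p1 * (\<Sum>j<p2. (\<sigma> j) ^ 4))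
                + real p1 * (MAX j\<in>{..<p2}. (\<sigma> j)\<^sup>2)))"
proof (intro exI[of _ "1 / 10"] conjI allI impI)
  fix p1 p2 :: nat and \<sigma> :: "nat \<Rightarrow> real"
  assume "0 < p2"
  have "spec_norm p1 p1 (\<lambda>i k. (\<Sum>j<p2. \<sigma> j * \<omega> (i, j) * (\<sigma> j * \<omega> (k, j)))
      - integral\<^sup>L (gauss_array_space p1 p2) (\<lambda>\<omega>. \<Sum>j<p2. \<sigma> j * \<omega> (i, j) * (\<sigma> j * \<omega> (k, j))))
    = spec_norm p1 p1 (centred_gram p2 \<sigma> \<omega>)" for \<omega>
    by (intro spec_norm_cong) (simp add: gauss_array_gram, simp add: gram_eq_centred_gram)
  with expectation_spec_norm_centred_gram_ge[OF \<open>0 < p2\<close>, of p1 \<sigma>]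
  show "let M = gauss_array_space p1 p2;
          Z = (\<lambda>\<omega> i j. \<sigma> j * \<omega> (i, j));
          ZZt = (\<lambda>\<omega> i k. \<Sum>j<p2. Z \<omega> i j * Z \<omega> k j);
          EZZt = (\<lambda>i k. integral\<^sup>L M (\<lambda>\<omega>. ZZt \<omega> i k))
      in integral\<^sup>L M (\<lambda>\<omega>. spec_norm p1 p1 (\<lambda>i k. ZZt \<omega> i k - EZZt i k))
         \<ge> 1 / 10 * (sqrt (real p1 * (\<Sum>j<p2. (\<sigma> j) ^ 4))
                + real p1 * (MAX j\<in>{..<p2}. (\<sigma> j)\<^sup>2))"
    by (simp add: Let_def)
qed (simp)

end
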